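(* Assume the hypotheses in the context, and assume $\lambda>\overline L$. Then there is a constant $C=C(\lambda,M_f,M_g,L_f,L_g,L_u)>0$ such that for all $0<h\le 1/(2\lambda)$, all $u\in\mathbb{U}_{\rm ad}$ and all $y_0\in\mathbb{R}^n$, with $\boldsymbol u=\{u(t_0),u(t_1),\dots\}$, $t_i=ih$, $$\left|\hat J(y_0,u)-\hat J_{h,k}(y_0,\boldsymbol u)\right|\le C(h+k).$$
   Context: Let $f:\mathbb{R}^n\times\mathbb{R}^m\to\mathbb{R}^n$ and $g:\mathbb{R}^n\times\mathbb{R}^m\to\mathbb{R}$, $\lambda>0$, and $U_{\rm ad}\subset\mathbb{R}^m$ compact and convex. Hypotheses: $\|f(y,u)-f(\tilde y,u)\|_2\le L_f\|y-\tilde y\|_2$ and $\|f(y,u)-f(y,\tilde u)\|_2\le L_f\|u-\tilde u\|_2$ for all $y,\tilde y\in\mathbb{R}^n$, $u,\tilde u\in U_{\rm ad}$; $|g(y,u)-g(\tilde y,u)|\le L_g\|y-\tilde y\|_2$ and $|g(y,u)-g(y,\tilde u)|\le L_g\|u-\tilde u\|_2$ likewise; $f,g$ continuous; $\overline\Omega\subset\mathbb{R}^n$ is a bounded polyhedron with $\max_{1\le i\le n}|f_i(y,u)|\le M_f$ and $|g(y,u)|\le M_g$ for all $(y,u)\in\overline\Omega\times U_{\rm ad}$ (and $y+hf(y,u)\in\overline\Omega$ for $y\in\overline\Omega$, $u\in U_{\rm ad}$, $h$ small). Admissible controls: $\mathbb{U}_{\rm ad}=\{u\in L^2(0,\infty;\mathbb{R}^m):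 u(t)\in U_{\rm ad}\text{ a.e.}\}$, and controls are assumed Lipschitz: $\|u(t)-u(s)\|_2\le L_u|t-s|$. For $u\in\mathbb{U}_{\rm ad}$, $y(t)$ solves $\dot y=f(y,u)$, $y(0)=y_0$, and $\hat J(y_0,u)=\int_0^\infty g(y(t),u(t))e^{-\lambda t}\,dt$. Fully discrete setting: a regular triangulation $\{S_j\}$ of $\overline\Omega$ by simplices with vertices $y_1,\dots,y_{n_s}$ and $k=\max_j\operatorname{diam}S_j$; $I_k$ denotes piecewise linear interpolation in the $y$ variable at the vertices. $C_I$ denotes a constant such that the interpolant's gradient satisfies $\|\nabla I_k f_j(\cdot,u)\|_2\le C_I\sqrt n L_f$ on each simplex, and $\overline L=C_I\,n\,L_f$. For a sequence $\boldsymbol u=\{u_0,u_1,\dots\}\subset U_{\rm ad}$ and $\delta_h=1-\lambda h$: $\hat y_0=y_0$, $\hat y_{n+1}=\hat y_n+hI_kf(\hat y_n,u_n)$, and $\hat J_{h,k}(y_0,\boldsymbol u)=h\sum_{n=0}^\infty\delta_h^n I_kg(\hat y_n,u_n)$. *)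

theory Defs
  imports "HOL-Analysis.Analysis"
begin

definition regular_triangulation :: "('a::euclidean_space) set set \<Rightarrow> 'a set \<Rightarrow> bool" where
  "regular_triangulation \<T> Om \<longleftrightarrow>
     triangulation \<T> \<and> (\<forall>S\<in>\<T>. int DIM('a) simplex S) \<and> \<Union>\<T> = Om"

definition verts :: "('a::real_vector) set \<Rightarrow> 'a set" where
  "verts S = {v. v extreme_point_of S}"

definition mesh :: "('a::euclidean_space) set set \<Rightarrow> real" where
  "mesh \<T> = Max (diameter ` \<T>)"

definition interp :: "('a::euclidean_space) set set \<Rightarrow> ('a \<Rightarrow> 'b::real_vector) \<Rightarrow> 'a \<Rightarrow> 'b" where
  "interp \<T> F y =
     (if y \<in> \<Union>\<T> then
        (SOME z. \<exists>S\<in>\<T>. y \<in> S \<and> (\<exists>c. (\<forall>v\<in>verts S. 0 \<le> c v) \<and> sum c (verts S) = 1 \<and>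
                   (\<Sum>v\<in>verts S. c v *\<^sub>R v) = y \<and> z = (\<Sum>v\<in>verts S. c v *\<^sub>R F v)))
      else 0)"

primrec disc_traj :: "('a::euclidean_space) set set \<Rightarrow> ('a \<Rightarrow> 'c \<Rightarrow> 'a) \<Rightarrow> real \<Rightarrow> 'a \<Rightarrow> (nat \<Rightarrow> 'c) \<Rightarrow> nat \<Rightarrow> 'a" where
  "disc_traj \<T> f h y0 us 0 = y0"
| "disc_traj \<T> f h y0 us (Suc n) =
     disc_traj \<T> f h y0 us n + h *\<^sub>R interp \<T> (\<lambda>z. f z (us n)) (disc_traj \<T> f h y0 us n)"

definition J_disc :: "('a::euclidean_space) set set \<Rightarrow> ('a \<Rightarrow> 'c \<Rightarrow> 'a) \<Rightarrow> ('a \<Rightarrow> 'c \<Rightarrow> real)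
    \<Rightarrow> real \<Rightarrow> real \<Rightarrow> 'a \<Rightarrow> (nat \<Rightarrow> 'c) \<Rightarrow> real" where
  "J_disc \<T> f g lam h y0 us =
     h * (\<Sum>n. (1 - lam * h) ^ n * interp \<T> (\<lambda>z. g z (us n)) (disc_traj \<T> f h y0 us n))"

definition J_cont :: "('a \<Rightarrow> 'c \<Rightarrow> real) \<Rightarrow> real \<Rightarrow> (real \<Rightarrow> 'a) \<Rightarrow> (real \<Rightarrow> 'c) \<Rightarrow> real" where
  "J_cont g lam y u = integral {0..} (\<lambda>t. g (y t) (u t) * exp (- lam * t))"

end

(*
  The fully discrete scheme is the explicit Euler method for y' = f(y,u) with f and g replaced by
  their piecewise linear interpolants I_k f, I_k g.  On each simplex the interpolant is affine, so
  the gradient bound makes I_k f(.,u) globally Lipschitz with constant L = C_I n L_f on the convex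
  set Om, and |I_k F - F| <= L_F k since I_k F(y) is a convex combination of values of F at points
  within distance k of y.  Hence the Euler error e_i = |y(t_i) - y_hat_i| satisfies
  e_(i+1) <= (1 + h L) e_i + C h (h + k), and the discrete Gronwall lemma gives
  e_i <= i h C (h + k) (1 + h L)^i.  On [t_i, t_(i+1)] the running cost g(y,u) e^(-lam t) differs
  from delta_h^i I_k g(y_hat_i, u_i) by at most (C (h + k) + L_g e_i) e^(-lam t_i)
  + M_g |e^(-lam t) - delta_h^i|.  As lam > L, the discount e^(-lam t_i) absorbs the growth
  (1 + h L)^i, and summing the resulting geometric series bounds the cost error by C (h + k).
  That the exact trajectory stays in Om follows from the invariance hypothesis applied to Euler
  polygons, which converge to the trajectory, and the closedness of Om.
*)
theory Submission
  imports Defs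
begin

section \<open>Barycentric coordinates and piecewise linear interpolation\<close>

definition barycentric_coords :: "'a::real_vector set \<Rightarrow> 'a \<Rightarrow> ('a \<Rightarrow> real) \<Rightarrow> bool" where
  "barycentric_coords V y c \<longleftrightarrow> (\<forall>v\<in>V. 0 \<le> c v) \<and> sum c V = 1 \<and> (\<Sum>v\<in>V. c v *\<^sub>R v) = y"

lemma convex_hull_finite_barycentric:
  "finite V \<Longrightarrow> y \<in> convex hull V \<longleftrightarrow> (\<exists>c. barycentric_coords V y c)"
  by (auto simp: convex_hull_finite barycentric_coords_def)

lemma barycentric_coords_unique:
  fixes V :: "'a::real_vector set"
  assumes V: "finite V" "\<not> affine_dependent V"
    and c: "barycentric_coords V y c" and d: "barycentric_coords V y d" and v: "v \<in> V"
  shows "c v = d v"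
proof (rule ccontr)
  assume ne: "c v \<noteq> d v"
  have "sum (\<lambda>w. c w - d w) V = 0" "(\<Sum>w\<in>V. (c w - d w) *\<^sub>R w) = 0"
    using c d by (simp_all add: barycentric_coords_def sum_subtractf scaleR_diff_left)
  then have "affine_dependent V"
    unfolding affine_dependent_explicit_finite[OF V(1)] using ne v
    by (intro exI[of _ "\<lambda>w. c w - d w"]) auto
  with V(2) show False by simp
qed

lemma barycentric_sum_subset:
  fixes F :: "'a::real_vector \<Rightarrow> 'b::real_vector"
  assumes V: "finite V" "\<not> affine_dependent V" and W: "W \<subseteq> V"
    and c: "barycentric_coords V y c" and d: "barycentric_coords W y d"
  shows "(\<Sum>v\<in>V. c v *\<^sub>R F v) = (\<Sum>v\<in>W. d v *\<^sub>R F v)"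
proof -
  define e where "e v = (if v \<in> W then d v else 0)" for v
  have extend: "(\<Sum>v\<in>V. e v *\<^sub>R G v) = (\<Sum>v\<in>W. d v *\<^sub>R G v)" for G :: "'a \<Rightarrow> 'c::real_vector"
    by (rule sum.mono_neutral_cong_right[OF V(1) W]) (auto simp: e_def)
  have "barycentric_coords V y e"
    using d extend[of "\<lambda>_. 1 :: real"] extend[of id]
    by (auto simp: barycentric_coords_def e_def)
  then have "c v = e v" if "v \<in> V" for v
    using barycentric_coords_unique[OF V c _ that] by blast
  then show ?thesis using extend[of F] by simp
qed

lemma affine_independent_convex_hull_eq:
  fixes W W' :: "'a::euclidean_space set"
  assumes "\<not> affine_dependent W" "\<not> affine_dependent W'" "convex hull W = convex hull W'"
  shows "W = W'"
proof -
  have "x \<in> W \<longleftrightarrow> x \<in> W'" for x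
    using extreme_point_of_convex_hull_affine_independent[OF assms(1), of x]
      extreme_point_of_convex_hull_affine_independent[OF assms(2), of x] assms(3) by simp
  then show ?thesis by auto
qed

text \<open>This makes the interpolant independent of the simplex chosen for a point on a common face.\<close>

lemma barycentric_sum_common_face:
  fixes F :: "'a::euclidean_space \<Rightarrow> 'b::real_vector"
  assumes V: "finite V" "\<not> affine_dependent V" "S = convex hull V"
    and V': "finite V'" "\<not> affine_dependent V'" "S' = convex hull V'"
    and face: "(S \<inter> S') face_of S" "(S \<inter> S') face_of S'"
    and c: "barycentric_coords V y c" and c': "barycentric_coords V' y c'"
  shows "(\<Sum>v\<in>V. c v *\<^sub>R F v) = (\<Sum>v\<in>V'. c' v *\<^sub>R F v)"
proof -
  obtain W where W: "W \<subseteq> V" "S \<inter> S' = convex hull W"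
    using face(1) face_of_convex_hull_affine_independent[OF V(2)] V(3) by auto
  obtain W' where W': "W' \<subseteq> V'" "S \<inter> S' = convex hull W'"
    using face(2) face_of_convex_hull_affine_independent[OF V'(2)] V'(3) by auto
  have indep: "\<not> affine_dependent W'" "\<not> affine_dependent W"
    using W(1) W'(1) V(2) V'(2) affine_dependent_subset by blast+
  have "convex hull W' = convex hull W" using W(2) W'(2) by simp
  then have "W' = W" by (rule affine_independent_convex_hull_eq[OF indep])
  have "y \<in> convex hull V" "y \<in> convex hull V'"
    using convex_hull_finite_barycentric[OF V(1)] convex_hull_finite_barycentric[OF V'(1)] c c' by blast+
  then have "y \<in> S" "y \<in> S'" using V(3) V'(3) by simp_all
  then have "y \<in> convex hull W" using W(2) by blast
  moreover have "finite W" using W(1) V(1) finite_subset by blast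
  ultimately obtain d where d: "barycentric_coords W y d"
    using convex_hull_finite_barycentric by blast
  have "(\<Sum>v\<in>V. c v *\<^sub>R F v) = (\<Sum>v\<in>W. d v *\<^sub>R F v)"
    by (rule barycentric_sum_subset[OF V(1,2) W(1) c d])
  moreover have "(\<Sum>v\<in>V'. c' v *\<^sub>R F v) = (\<Sum>v\<in>W. d v *\<^sub>R F v)"
    using barycentric_sum_subset[OF V'(1,2) W'(1) c'] d \<open>W' = W\<close> by simp
  ultimately show ?thesis by simp
qed

lemma simplex_verts:
  fixes S :: "'a::euclidean_space set"
  assumes "n simplex S"
  shows "finite (verts S)" "\<not> affine_dependent (verts S)" "int (card (verts S)) = n + 1"
    "S = convex hull (verts S)"
proof -
  obtain C where C: "\<not> affine_dependent C" "int (card C) = n + 1" "S = convex hull C"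
    using assms by (auto simp: simplex_def)
  have "verts S = C"
    using extreme_point_of_convex_hull_affine_independent[OF C(1)] C(3) by (auto simp: verts_def)
  then show "finite (verts S)" "\<not> affine_dependent (verts S)" "int (card (verts S)) = n + 1"
    "S = convex hull (verts S)"
    using C aff_independent_finite by auto
qed

lemma barycentric_sum_affine:
  fixes F :: "'a::euclidean_space \<Rightarrow> real"
  assumes V: "finite V" "\<not> affine_dependent V"
  obtains a D where "\<And>y c. barycentric_coords V y c \<Longrightarrow> (\<Sum>v\<in>V. c v *\<^sub>R F v) = a + D \<bullet> y"
proof (cases "V = {}")
  case True
  then show ?thesis using that by (auto simp: barycentric_coords_def)
next
  case False
  then obtain v0 where v0: "v0 \<in> V" by auto
  define B where "B = (\<lambda>x. - v0 + x) ` (V - {v0})"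
  have "\<not> dependent B"
    using affine_dependent_iff_dependent[of v0 "V - {v0}"] V(2) v0 by (simp add: B_def insert_absorb)
  then obtain l where l: "linear l" "\<forall>x\<in>B. l x = F (x + v0) - F v0"
    using linear_independent_extend[of B "\<lambda>x. F (x + v0) - F v0"] by blast
  define D where "D = adjoint l 1"
  have lD: "l x = D \<bullet> x" for x
    using adjoint_works[OF l(1), of x 1] by (simp add: D_def inner_commute)
  have Fv: "F v = F v0 + D \<bullet> (v - v0)" if v: "v \<in> V" for v
  proof (cases "v = v0")
    case True
    then show ?thesis by simp
  next
    case False
    then have "v - v0 \<in> B" using v unfolding B_def by (intro image_eqI[of _ _ v]) auto
    then show ?thesis using l(2) by (simp add: lD)
  qed
  have "(\<Sum>v\<in>V. c v *\<^sub>R F v) = F v0 - D \<bullet> v0 + D \<bullet> y" if c: "barycentric_coords V y c" for y c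
  proof -
    have "(\<Sum>v\<in>V. c v *\<^sub>R F v) = (\<Sum>v\<in>V. c v * F v0 + D \<bullet> (c v *\<^sub>R v - c v *\<^sub>R v0))"
      using Fv by (intro sum.cong) (simp_all add: distrib_left inner_diff_right right_diff_distrib)
    also have "\<dots> = (\<Sum>v\<in>V. c v) * F v0 + D \<bullet> ((\<Sum>v\<in>V. c v *\<^sub>R v) - (\<Sum>v\<in>V. c v) *\<^sub>R v0)"
      by (simp add: sum.distrib sum_distrib_right inner_sum_right inner_diff_right sum_subtractf
          scaleR_sum_left)
    also have "\<dots> = F v0 + D \<bullet> (y - v0)"
      using c by (simp add: barycentric_coords_def)
    finally show ?thesis by (simp add: inner_diff_right)
  qed
  then show ?thesis using that by blast
qed

lemma gderiv_affine_on:
  assumes "\<And>y. y \<in> S \<Longrightarrow> F y = a + D \<bullet> y" and z: "z \<in> interior S"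
  shows "GDERIV F z :> D"
proof -
  have "((\<lambda>y. a + D \<bullet> y) has_derivative (\<lambda>h. h \<bullet> D)) (at z)"
    by (auto intro!: derivative_eq_intros simp: inner_commute)
  moreover have "a + D \<bullet> x = F x" if "x \<in> interior S" for x
  proof -
    have "x \<in> S" using that interior_subset by blast
    then show ?thesis using assms(1) by simp
  qed
  ultimately show ?thesis
    unfolding gderiv_def by (rule has_derivative_transform_within_open[OF _ open_interior z])
qed

lemma norm_le_sqrt_card_mult:
  fixes x :: "real^'n"
  assumes "\<And>j. \<bar>x $ j\<bar> \<le> M"
  shows "norm x \<le> sqrt (real CARD('n)) * M"
proof -
  have M: "0 \<le> M" using abs_ge_zero[of "x $ undefined"] assms[of undefined] by linarith
  have "norm x \<le> norm (\<chi> j::'n. M)"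
    using assms M by (intro norm_le_componentwise_cart) simp
  also have "\<dots> = sqrt (real CARD('n)) * M"
    using M by (simp add: norm_vec_def L2_set_constant)
  finally show ?thesis .
qed

text \<open>Restrict to segments and apply the one-dimensional \<open>lipschitz_on_closed_Union\<close>.\<close>

lemma lipschitz_on_convex_closed_Union:
  fixes F :: "'a::real_normed_vector \<Rightarrow> 'b::metric_space"
  assumes "finite \<A>" "\<And>A. A \<in> \<A> \<Longrightarrow> closed A" "\<And>A. A \<in> \<A> \<Longrightarrow> K-lipschitz_on A F"
    and "convex X" "X \<subseteq> \<Union>\<A>" "0 \<le> K"
  shows "K-lipschitz_on X F"
proof (rule lipschitz_onI[OF _ \<open>0 \<le> K\<close>])
  fix p q assume pq: "p \<in> X" "q \<in> X"
  define \<gamma> where "\<gamma> t = (1 - t) *\<^sub>R p + t *\<^sub>R q" for t :: real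
  have dist_\<gamma>: "dist (\<gamma> s) (\<gamma> t) = dist p q * dist s t" for s t
  proof -
    have "\<gamma> s - \<gamma> t = (t - s) *\<^sub>R (p - q)" by (simp add: \<gamma>_def algebra_simps)
    then show ?thesis by (simp add: dist_norm dist_real_def abs_minus_commute)
  qed
  have "(K * dist p q)-lipschitz_on {0..1} (F \<circ> \<gamma>)"
  proof (rule lipschitz_on_closed_Union[where I = \<A> and U = "\<lambda>A. \<gamma> -` A"])
    show "(K * dist p q)-lipschitz_on (\<gamma> -` A) (F \<circ> \<gamma>)" if A: "A \<in> \<A>" for A
    proof (rule lipschitz_onI)
      fix s t assume "s \<in> \<gamma> -` A" "t \<in> \<gamma> -` A"
      then have "dist (F (\<gamma> s)) (F (\<gamma> t)) \<le> K * dist (\<gamma> s) (\<gamma> t)"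
        using lipschitz_onD[OF assms(3)[OF A]] by simp
      then show "dist ((F \<circ> \<gamma>) s) ((F \<circ> \<gamma>) t) \<le> K * dist p q * dist s t"
        by (simp add: dist_\<gamma> mult.assoc)
    qed (use assms(6) in simp)
    show "closed (\<gamma> -` A)" if "A \<in> \<A>" for A
      using assms(2)[OF that] unfolding \<gamma>_def
      by (intro continuous_closed_vimage) (auto intro!: continuous_intros)
    show "{0..1} \<subseteq> (\<Union>A\<in>\<A>. \<gamma> -` A)"
    proof
      fix t :: real assume "t \<in> {0..1}"
      then have "\<gamma> t \<in> X" using convexD[OF assms(4) pq, of "1 - t" t] by (simp add: \<gamma>_def)
      then show "t \<in> (\<Union>A\<in>\<A>. \<gamma> -` A)" using assms(5) by blast
    qed
  qed (use assms(1,6) in auto)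
  from lipschitz_onD[OF this, of 1 0] show "dist (F p) (F q) \<le> K * dist p q"
    by (simp add: \<gamma>_def dist_commute)
qed

context
  fixes \<T> :: "'a::euclidean_space set set" and Om :: "'a set"
  assumes tri: "regular_triangulation \<T> Om"
begin

lemma regular_triangulation_simplex:
  assumes "S \<in> \<T>"
  shows "finite (verts S)" "\<not> affine_dependent (verts S)" "card (verts S) = DIM('a) + 1"
    "S = convex hull (verts S)"
  using simplex_verts[of "int DIM('a)" S] tri assms by (auto simp: regular_triangulation_def)

lemma regular_triangulation_Union: "\<Union>\<T> = Om"
  using tri by (simp add: regular_triangulation_def)

lemma regular_triangulation_finite: "finite \<T>"
  using tri by (simp add: regular_triangulation_def triangulation_def)

lemma regular_triangulation_compact: "S \<in> \<T> \<Longrightarrow> compact S"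
  by (metis regular_triangulation_simplex(1,4) finite_imp_compact_convex_hull)

lemma verts_subset_simplex: "S \<in> \<T> \<Longrightarrow> verts S \<subseteq> S"
  by (metis hull_subset regular_triangulation_simplex(4))

lemma verts_subset: "S \<in> \<T> \<Longrightarrow> verts S \<subseteq> Om"
  using regular_triangulation_Union verts_subset_simplex by blast

lemma interp_on_simplex:
  fixes F :: "'a \<Rightarrow> 'b::real_vector"
  assumes S: "S \<in> \<T>" and c: "barycentric_coords (verts S) y c"
  shows "interp \<T> F y = (\<Sum>v\<in>verts S. c v *\<^sub>R F v)"
proof -
  define P where "P z \<longleftrightarrow> (\<exists>S\<in>\<T>. y \<in> S \<and>
    (\<exists>c. barycentric_coords (verts S) y c \<and> z = (\<Sum>v\<in>verts S. c v *\<^sub>R F v)))" for z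
  have "y \<in> convex hull (verts S)"
    using c convex_hull_finite_barycentric[OF regular_triangulation_simplex(1)[OF S]] by blast
  then have yS: "y \<in> S" using regular_triangulation_simplex(4)[OF S] by simp
  then have "interp \<T> F y = (SOME z. P z)"
    using S by (auto simp: interp_def P_def barycentric_coords_def conj_assoc)
  have "P (\<Sum>v\<in>verts S. c v *\<^sub>R F v)"
    using S yS c by (auto simp: P_def)
  then have "P (SOME z. P z)" by (rule someI)
  then obtain S' c' where S': "S' \<in> \<T>" "barycentric_coords (verts S') y c'"
    "(SOME z. P z) = (\<Sum>v\<in>verts S'. c' v *\<^sub>R F v)"
    unfolding P_def by blast
  have "(S \<inter> S') face_of S" "(S' \<inter> S) face_of S'"
    using tri S S'(1) by (auto simp: regular_triangulation_def triangulation_def)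
  then have "(S \<inter> S') face_of S" "(S \<inter> S') face_of S'" by (simp_all only: Int_commute)
  then have "(\<Sum>v\<in>verts S. c v *\<^sub>R F v) = (\<Sum>v\<in>verts S'. c' v *\<^sub>R F v)"
    by (intro barycentric_sum_common_face[OF regular_triangulation_simplex(1,2,4)[OF S]
        regular_triangulation_simplex(1,2,4)[OF S'(1)] _ _ c S'(2)])
  moreover have "interp \<T> F y = (\<Sum>v\<in>verts S'. c' v *\<^sub>R F v)"
    using S'(3) \<open>interp \<T> F y = (SOME z. P z)\<close> by (simp only:)
  ultimately show ?thesis by (simp only:)
qed

lemma barycentric_coordsE:
  assumes "y \<in> Om"
  obtains S c where "S \<in> \<T>" "y \<in> S" "barycentric_coords (verts S) y c"
proof -
  obtain S where S: "S \<in> \<T>" "y \<in> S" using assms regular_triangulation_Union by auto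
  then have "y \<in> convex hull (verts S)" using regular_triangulation_simplex(4)[OF S(1)] by simp
  then obtain c where "barycentric_coords (verts S) y c"
    using convex_hull_finite_barycentric[OF regular_triangulation_simplex(1)[OF S(1)]] by blast
  then show ?thesis using that S by blast
qed

lemma interp_dist_le:
  fixes F :: "'a \<Rightarrow> 'b::real_normed_vector"
  assumes y: "y \<in> Om" and B: "\<And>S v. S \<in> \<T> \<Longrightarrow> y \<in> S \<Longrightarrow> v \<in> verts S \<Longrightarrow> norm (F v - G) \<le> B"
  shows "norm (interp \<T> F y - G) \<le> B"
proof -
  obtain S c where S: "S \<in> \<T>" "y \<in> S" and c: "barycentric_coords (verts S) y c"
    using barycentric_coordsE[OF y] .
  note I = interp_on_simplex[OF S(1) c, of F]
  have "interp \<T> F y - G = (\<Sum>v\<in>verts S. c v *\<^sub>R (F v - G))"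
    using c I by (simp add: barycentric_coords_def scaleR_diff_right sum_subtractf flip: scaleR_sum_left)
  also have "norm \<dots> \<le> (\<Sum>v\<in>verts S. norm (c v *\<^sub>R (F v - G)))" by (rule norm_sum)
  also have "\<dots> \<le> (\<Sum>v\<in>verts S. c v * B)"
  proof (rule sum_mono)
    fix v assume v: "v \<in> verts S"
    then have "0 \<le> c v" using c by (simp add: barycentric_coords_def)
    then show "norm (c v *\<^sub>R (F v - G)) \<le> c v * B" using B[OF S v] by (simp add: mult_left_mono)
  qed
  also have "\<dots> = B"
    using c by (simp add: barycentric_coords_def flip: sum_distrib_right)
  finally show ?thesis .
qed

lemma interp_error_le:
  fixes F :: "'a \<Rightarrow> 'b::real_normed_vector"
  assumes y: "y \<in> Om" and L: "0 \<le> L" "\<And>v. v \<in> Om \<Longrightarrow> norm (F v - F y) \<le> L * norm (v - y)"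
  shows "norm (interp \<T> F y - F y) \<le> L * mesh \<T>"
proof (rule interp_dist_le[OF y])
  fix S v assume S: "S \<in> \<T>" "y \<in> S" and v: "v \<in> verts S"
  have "bounded S" using regular_triangulation_compact[OF S(1)] compact_imp_bounded by blast
  moreover have "v \<in> S" using v verts_subset_simplex[OF S(1)] by blast
  ultimately have "norm (v - y) \<le> diameter S"
    using diameter_bounded_bound[of S v y] S by (simp add: dist_norm)
  also have "diameter S \<le> mesh \<T>"
    unfolding mesh_def using regular_triangulation_finite S(1) by (intro Max_ge) auto
  finally have "L * norm (v - y) \<le> L * mesh \<T>" using L(1) by (rule mult_left_mono)
  moreover have "v \<in> Om" using verts_subset[OF S(1)] v by blast
  ultimately show "norm (F v - F y) \<le> L * mesh \<T>" using L(2)[of v] by linarith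
qed

lemma mesh_nonneg:
  assumes "y \<in> Om"
  shows "0 \<le> mesh \<T>"
proof -
  have "norm (interp \<T> id y - id y) \<le> 1 * mesh \<T>"
    by (rule interp_error_le[OF assms zero_le_one]) simp
  then show ?thesis using norm_ge_zero[of "interp \<T> id y - id y"] by linarith
qed

lemma interp_norm_le:
  fixes F :: "'a \<Rightarrow> 'b::real_normed_vector"
  assumes "y \<in> Om" "\<And>v. v \<in> Om \<Longrightarrow> norm (F v) \<le> M"
  shows "norm (interp \<T> F y) \<le> M"
proof -
  have "norm (interp \<T> F y - 0) \<le> M"
  proof (rule interp_dist_le[OF assms(1)])
    fix S v assume "S \<in> \<T>" "v \<in> verts S"
    then have "v \<in> Om" using verts_subset by blast
    then show "norm (F v - 0) \<le> M" using assms(2) by simp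
  qed
  then show ?thesis by simp
qed

lemma interp_component:
  fixes F :: "'a \<Rightarrow> real^'k"
  assumes "y \<in> Om"
  shows "interp \<T> F y $ j = interp \<T> (\<lambda>x. F x $ j) y"
proof -
  obtain S c where S: "S \<in> \<T>" and c: "barycentric_coords (verts S) y c"
    using barycentric_coordsE[OF assms] .
  have "interp \<T> F y $ j = (\<Sum>v\<in>verts S. c v *\<^sub>R F v) $ j"
    by (simp only: interp_on_simplex[OF S c])
  also have "\<dots> = (\<Sum>v\<in>verts S. c v *\<^sub>R F v $ j)"
    by (simp add: sum_component)
  also have "\<dots> = interp \<T> (\<lambda>x. F x $ j) y"
    by (simp only: interp_on_simplex[OF S c])
  finally show ?thesis .
qed

lemma interp_euler_step_mem:
  fixes F :: "'a \<Rightarrow> 'a"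
  assumes "convex Om" "y \<in> Om" "\<And>v. v \<in> Om \<Longrightarrow> v + h *\<^sub>R F v \<in> Om"
  shows "y + h *\<^sub>R interp \<T> F y \<in> Om"
proof -
  obtain S c where S: "S \<in> \<T>" and c: "barycentric_coords (verts S) y c"
    using barycentric_coordsE[OF assms(2)] .
  note I = interp_on_simplex[OF S c, of F]
  have "y + h *\<^sub>R interp \<T> F y = (\<Sum>v\<in>verts S. c v *\<^sub>R (v + h *\<^sub>R F v))"
    using c I by (simp add: barycentric_coords_def scaleR_add_right sum.distrib scaleR_sum_right mult.commute)
  also have "\<dots> \<in> Om"
    using c assms(1,3) verts_subset[OF S] regular_triangulation_simplex(1)[OF S]
    by (intro convex_sum) (auto simp: barycentric_coords_def)
  finally show ?thesis .
qed

lemma interp_affine_on_simplex: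
  fixes F :: "'a \<Rightarrow> real"
  assumes S: "S \<in> \<T>"
  obtains a D where "\<And>y. y \<in> S \<Longrightarrow> interp \<T> F y = a + D \<bullet> y"
proof -
  obtain a D where aD: "\<And>y c. barycentric_coords (verts S) y c \<Longrightarrow> (\<Sum>v\<in>verts S. c v *\<^sub>R F v) = a + D \<bullet> y"
    using barycentric_sum_affine[OF regular_triangulation_simplex(1,2)[OF S]] by metis
  have "interp \<T> F y = a + D \<bullet> y" if yS: "y \<in> S" for y
  proof -
    have "y \<in> convex hull (verts S)" using yS regular_triangulation_simplex(4)[OF S] by simp
    then obtain c where c: "barycentric_coords (verts S) y c"
      using convex_hull_finite_barycentric[OF regular_triangulation_simplex(1)[OF S]] by blast
    show ?thesis using interp_on_simplex[OF S c, of F] aD[OF c] by simp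
  qed
  then show ?thesis using that by blast
qed

lemma regular_triangulation_interior_nonempty:
  assumes S: "S \<in> \<T>"
  shows "interior S \<noteq> {}"
proof -
  have "int DIM('a) simplex S" using tri S by (simp add: regular_triangulation_def)
  then have "aff_dim S = int DIM('a)" by (rule aff_dim_simplex)
  then have "interior S = rel_interior S" by (simp add: interior_rel_interior)
  moreover have "convex S" by (metis regular_triangulation_simplex(4)[OF S] convex_convex_hull)
  moreover have "verts S \<noteq> {}" using regular_triangulation_simplex(3)[OF S] by auto
  then have "S \<noteq> {}" using verts_subset_simplex[OF S] by blast
  ultimately show ?thesis by (simp add: rel_interior_eq_empty)
qed

lemma interp_lipschitz_on_simplex:
  fixes F :: "'a \<Rightarrow> real^'k"
  assumes S: "S \<in> \<T>"
    and grad: "\<And>z j D. z \<in> interior S \<Longrightarrow> GDERIV (interp \<T> (\<lambda>x. F x $ j)) z :> D \<Longrightarrow> norm D \<le> B"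
  shows "(sqrt (real CARD('k)) * B)-lipschitz_on S (interp \<T> F)"
proof -
  obtain z where z: "z \<in> interior S" using regular_triangulation_interior_nonempty[OF S] by blast
  have gradient: "\<exists>D. norm D \<le> B
      \<and> (\<forall>p\<in>S. \<forall>q\<in>S. interp \<T> (\<lambda>x. F x $ j) p - interp \<T> (\<lambda>x. F x $ j) q = D \<bullet> (p - q))" for j
  proof -
    obtain a D where aD: "\<And>y. y \<in> S \<Longrightarrow> interp \<T> (\<lambda>x. F x $ j) y = a + D \<bullet> y"
      using interp_affine_on_simplex[OF S] by metis
    then show ?thesis
      using grad[OF z gderiv_affine_on[OF aD z]] by (auto simp: inner_diff_right)
  qed
  obtain D :: 'a where "norm D \<le> B" using gradient[of undefined] by blast
  then have "0 \<le> B" using norm_ge_zero[of D] by linarith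
  have component: "\<bar>(interp \<T> F p - interp \<T> F q) $ j\<bar> \<le> B * norm (p - q)"
    if pq: "p \<in> S" "q \<in> S" for p q j
  proof -
    obtain D where D: "norm D \<le> B"
      and diff: "interp \<T> (\<lambda>x. F x $ j) p - interp \<T> (\<lambda>x. F x $ j) q = D \<bullet> (p - q)"
      using gradient[of j] pq by blast
    have "p \<in> Om" "q \<in> Om" using pq S regular_triangulation_Union by blast+
    then have "\<bar>(interp \<T> F p - interp \<T> F q) $ j\<bar> = \<bar>D \<bullet> (p - q)\<bar>"
      using diff by (simp add: interp_component)
    also have "\<dots> \<le> norm D * norm (p - q)" by (rule Cauchy_Schwarz_ineq2)
    also have "\<dots> \<le> B * norm (p - q)" using D by (simp add: mult_right_mono)
    finally show ?thesis .
  qed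
  show ?thesis
  proof (rule lipschitz_onI)
    fix p q assume "p \<in> S" "q \<in> S"
    then have "norm (interp \<T> F p - interp \<T> F q) \<le> sqrt (real CARD('k)) * (B * norm (p - q))"
      using component by (intro norm_le_sqrt_card_mult) simp
    then show "dist (interp \<T> F p) (interp \<T> F q) \<le> sqrt (real CARD('k)) * B * dist p q"
      by (simp add: dist_norm mult.assoc)
  qed (simp add: \<open>0 \<le> B\<close>)
qed

lemma interp_lipschitz_on:
  assumes "convex Om" "0 \<le> K" "\<And>S. S \<in> \<T> \<Longrightarrow> K-lipschitz_on S (interp \<T> F)"
  shows "K-lipschitz_on Om (interp \<T> F)"
proof (rule lipschitz_on_convex_closed_Union[OF regular_triangulation_finite _ assms(3,1) _ assms(2)])
  show "closed S" if "S \<in> \<T>" for S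
    using regular_triangulation_compact[OF that] by (rule compact_imp_closed)
  show "Om \<subseteq> \<Union>\<T>" using regular_triangulation_Union by simp
qed

lemma interp_lipschitz_on_gradient_le:
  fixes F :: "'a \<Rightarrow> real^'k"
  assumes "convex Om" "0 \<le> K" "sqrt (real CARD('k)) * B \<le> K"
    and grad: "\<And>S z j D. S \<in> \<T> \<Longrightarrow> z \<in> interior S \<Longrightarrow> GDERIV (interp \<T> (\<lambda>x. F x $ j)) z :> D
      \<Longrightarrow> norm D \<le> B"
  shows "K-lipschitz_on Om (interp \<T> F)"
proof (rule interp_lipschitz_on[OF assms(1,2)])
  fix S assume S: "S \<in> \<T>"
  have "(sqrt (real CARD('k)) * B)-lipschitz_on S (interp \<T> F)"
    using grad[OF S] by (rule interp_lipschitz_on_simplex[OF S])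
  then show "K-lipschitz_on S (interp \<T> F)" by (rule lipschitz_on_mono[OF _ order_refl assms(3)])
qed

end

section \<open>Euler schemes\<close>

lemma discrete_gronwall:
  fixes e :: "nat \<Rightarrow> real"
  assumes a: "0 \<le> a" and b: "0 \<le> b" and e0: "e 0 \<le> 0"
    and step: "\<And>i. i < N \<Longrightarrow> e (Suc i) \<le> (1 + a) * e i + b"
  shows "i \<le> N \<Longrightarrow> e i \<le> real i * b * (1 + a) ^ i"
proof (induction i)
  case 0
  then show ?case using e0 by simp
next
  case (Suc i)
  have "1 \<le> (1 + a) ^ Suc i" using a by (intro one_le_power) simp
  then have "b \<le> b * (1 + a) ^ Suc i" using b by (simp add: mult_le_cancel_left1)
  moreover have "(1 + a) * e i \<le> (1 + a) * (real i * b * (1 + a) ^ i)"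
    using Suc a by (intro mult_left_mono) auto
  ultimately have "(1 + a) * e i + b \<le> real (Suc i) * b * (1 + a) ^ Suc i"
    by (simp add: algebra_simps)
  then show ?case using step[of i] Suc.prems by simp
qed

lemma lipschitz_on_vector_derivative_bound:
  fixes y :: "real \<Rightarrow> 'v::real_normed_vector"
  assumes "\<And>t. t \<in> X \<Longrightarrow> (y has_vector_derivative G t) (at t within X)" "convex X"
    and "\<And>t. t \<in> X \<Longrightarrow> norm (G t) \<le> R" "0 \<le> R"
  shows "R-lipschitz_on X y"
  using assms
  by (intro bounded_derivative_imp_lipschitz[where f' = "\<lambda>t h. h *\<^sub>R G t"])
    (auto simp: has_vector_derivative_def onorm_scaleR_left[OF bounded_linear_ident] onorm_id)

lemma euler_step_error:
  fixes y G :: "real \<Rightarrow> 'v::real_normed_vector"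
  assumes der: "\<And>s. s \<in> {t..t + k} \<Longrightarrow> (y has_vector_derivative G s) (at s within {t..t + k})"
    and k: "0 \<le> k" and osc: "\<And>s. s \<in> {t..t + k} \<Longrightarrow> norm (G s - G t) \<le> B"
    and consistent: "norm (G t - \<Phi> (y t)) \<le> \<epsilon>"
    and lip: "norm (\<Phi> (y t) - \<Phi> z) \<le> L * norm (y t - z)"
  shows "norm (y (t + k) - (z + k *\<^sub>R \<Phi> z)) \<le> (1 + k * L) * norm (y t - z) + k * (B + \<epsilon>)"
proof -
  have "norm (y (t + k) - y t - (t + k - t) *\<^sub>R G t) \<le> norm (t + k - t) * B"
    by (rule vector_differentiable_bound_linearization[OF der _ osc])
      (use k in \<open>auto simp: closed_segment_eq_real_ivl\<close>)
  then have lin: "norm (y (t + k) - y t - k *\<^sub>R G t) \<le> k * B" using k by simp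
  define a where "a = y (t + k) - y t - k *\<^sub>R G t"
  define b where "b = y t - z"
  define c where "c = k *\<^sub>R (G t - \<Phi> (y t))"
  define d where "d = k *\<^sub>R (\<Phi> (y t) - \<Phi> z)"
  have eq: "y (t + k) - (z + k *\<^sub>R \<Phi> z) = a + b + c + d"
    by (simp add: a_def b_def c_def d_def algebra_simps)
  have "norm (y (t + k) - (z + k *\<^sub>R \<Phi> z)) \<le> norm a + norm b + norm c + norm d"
    unfolding eq using norm_triangle_ineq[of "a + b + c" d] norm_triangle_ineq[of "a + b" c]
      norm_triangle_ineq[of a b] by linarith
  moreover have "norm c \<le> k * \<epsilon>" "norm d \<le> k * (L * norm (y t - z))"
    using consistent lip k by (simp_all add: c_def d_def mult_left_mono)
  moreover have "norm a \<le> k * B" "norm b = norm (y t - z)" using lin by (simp_all add: a_def b_def)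
  ultimately have "norm (y (t + k) - (z + k *\<^sub>R \<Phi> z))
      \<le> k * B + norm (y t - z) + k * \<epsilon> + k * (L * norm (y t - z))"
    by linarith
  then show ?thesis by (simp add: algebra_simps)
qed

lemma euler_global_error:
  fixes y G :: "real \<Rightarrow> 'v::real_normed_vector" and z :: "nat \<Rightarrow> 'v"
  assumes der: "\<And>t. 0 \<le> t \<Longrightarrow> (y has_vector_derivative G t) (at t within {0..})"
    and k: "0 \<le> k" and L: "0 \<le> L" and B: "0 \<le> B + \<epsilon>" and z0: "z 0 = y 0"
    and zS: "\<And>i. i < N \<Longrightarrow> z (Suc i) = z i + k *\<^sub>R \<Phi> i (z i)"
    and osc: "\<And>i s. i < N \<Longrightarrow> s \<in> {real i * k..real i * k + k} \<Longrightarrow> norm (G s - G (real i * k)) \<le> B"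
    and consistent: "\<And>i. i < N \<Longrightarrow> norm (G (real i * k) - \<Phi> i (y (real i * k))) \<le> \<epsilon>"
    and lip: "\<And>i. i < N \<Longrightarrow>
      norm (\<Phi> i (y (real i * k)) - \<Phi> i (z i)) \<le> L * norm (y (real i * k) - z i)"
  shows "norm (y (real N * k) - z N) \<le> real N * (k * (B + \<epsilon>)) * (1 + k * L) ^ N"
proof (rule discrete_gronwall[where e = "\<lambda>i. norm (y (real i * k) - z i)", OF _ _ _ _ order_refl])
  fix i assume i: "i < N"
  have t0: "0 \<le> real i * k" using k by simp
  have "(y has_vector_derivative G s) (at s within {real i * k..real i * k + k})"
    if s: "s \<in> {real i * k..real i * k + k}" for s
  proof (rule has_vector_derivative_within_subset[OF der])
    have "real i * k \<le> s" using s by simp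
    then show "0 \<le> s" using t0 by linarith
    show "{real i * k..real i * k + k} \<subseteq> {0..}" using t0 by auto
  qed
  then have "norm (y (real i * k + k) - (z i + k *\<^sub>R \<Phi> i (z i)))
      \<le> (1 + k * L) * norm (y (real i * k) - z i) + k * (B + \<epsilon>)"
    using osc[OF i] consistent[OF i] lip[OF i] k by (intro euler_step_error) auto
  then show "norm (y (real (Suc i) * k) - z (Suc i))
      \<le> (1 + k * L) * norm (y (real i * k) - z i) + k * (B + \<epsilon>)"
    using zS[OF i] by (simp add: algebra_simps)
qed (use k L B z0 in auto)

lemma lipschitz_pair_norm_le:
  fixes \<phi> :: "'a::real_normed_vector \<Rightarrow> 'b::real_normed_vector \<Rightarrow> 'c::real_normed_vector"
  assumes lip_a: "\<And>a b w. w \<in> U \<Longrightarrow> norm (\<phi> a w - \<phi> b w) \<le> L * norm (a - b)"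
    and lip_w: "\<And>a w w'. w \<in> U \<Longrightarrow> w' \<in> U \<Longrightarrow> norm (\<phi> a w - \<phi> a w') \<le> L * norm (w - w')"
    and "w \<in> U" "w' \<in> U"
  shows "norm (\<phi> a w - \<phi> b w') \<le> L * (norm (a - b) + norm (w - w'))"
proof -
  have "norm (\<phi> a w - \<phi> b w') \<le> norm (\<phi> a w - \<phi> b w) + norm (\<phi> b w - \<phi> b w')"
    by (rule norm_diff_triangle_le[of _ "\<phi> b w"]) simp_all
  also have "\<dots> \<le> L * norm (a - b) + L * norm (w - w')"
    using assms by (intro add_mono) auto
  finally show ?thesis by (simp add: distrib_left)
qed

locale controlled_ode =
  fixes f :: "'v::euclidean_space \<Rightarrow> 'w::real_normed_vector \<Rightarrow> 'v" and U :: "'w set"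
    and L_f :: real and u :: "real \<Rightarrow> 'w" and L_u :: real and y :: "real \<Rightarrow> 'v"
  assumes f_lip_y: "\<And>a b w. w \<in> U \<Longrightarrow> norm (f a w - f b w) \<le> L_f * norm (a - b)"
    and f_lip_u: "\<And>a w w'. w \<in> U \<Longrightarrow> w' \<in> U \<Longrightarrow> norm (f a w - f a w') \<le> L_f * norm (w - w')"
    and u_mem: "\<And>t. 0 \<le> t \<Longrightarrow> u t \<in> U"
    and u_lip: "\<And>s t. 0 \<le> s \<Longrightarrow> 0 \<le> t \<Longrightarrow> norm (u t - u s) \<le> L_u * \<bar>t - s\<bar>"
    and y_deriv: "\<And>t. 0 \<le> t \<Longrightarrow> (y has_vector_derivative f (y t) (u t)) (at t within {0..})"
begin

lemma L_f_nonneg: "0 \<le> L_f"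
proof -
  obtain b :: 'v where "b \<in> Basis" using nonempty_Basis by blast
  then have "norm (f b (u 0) - f 0 (u 0)) \<le> L_f" using f_lip_y[OF u_mem, of 0 b 0] by simp
  then show ?thesis using norm_ge_zero[of "f b (u 0) - f 0 (u 0)"] by linarith
qed

lemma L_u_nonneg: "0 \<le> L_u"
proof -
  have "norm (u 1 - u 0) \<le> L_u" using u_lip[of 0 1] by simp
  then show ?thesis using norm_ge_zero[of "u 1 - u 0"] by linarith
qed

lemma rhs_dist_le:
  assumes "0 \<le> s" "0 \<le> t"
  shows "norm (f (y t) (u t) - f (y s) (u s)) \<le> L_f * (norm (y t - y s) + L_u * \<bar>t - s\<bar>)"
proof -
  have "norm (f (y t) (u t) - f (y s) (u s)) \<le> L_f * (norm (y t - y s) + norm (u t - u s))"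
    using assms u_mem by (intro lipschitz_pair_norm_le f_lip_y f_lip_u) auto
  also have "\<dots> \<le> L_f * (norm (y t - y s) + L_u * \<bar>t - s\<bar>)"
    using u_lip[OF assms] L_f_nonneg by (intro mult_left_mono add_left_mono)
  finally show ?thesis .
qed

lemma rhs_oscillation:
  assumes "R-lipschitz_on X y" "0 \<le> s" "s \<le> t" "{s..t} \<subseteq> X"
  shows "t' \<in> {s..t} \<Longrightarrow> norm (f (y t') (u t') - f (y s) (u s)) \<le> L_f * (R + L_u) * (t - s)"
proof -
  assume t': "t' \<in> {s..t}"
  then have "t' \<in> X" "s \<in> X" using assms(3,4) by auto
  then have "norm (y t' - y s) \<le> R * (t' - s)"
    using lipschitz_on_normD[OF assms(1) \<open>t' \<in> X\<close> \<open>s \<in> X\<close>] t' by simp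
  then have "L_f * (norm (y t' - y s) + L_u * \<bar>t' - s\<bar>) \<le> L_f * (R * (t' - s) + L_u * (t' - s))"
    using t' L_f_nonneg by (intro mult_left_mono) auto
  then have "norm (f (y t') (u t') - f (y s) (u s)) \<le> L_f * (R * (t' - s) + L_u * (t' - s))"
    using rhs_dist_le[of s t'] assms(2) t' by simp
  also have "\<dots> \<le> L_f * (R + L_u) * (t - s)"
    using t' L_f_nonneg L_u_nonneg lipschitz_on_nonneg[OF assms(1)]
    by (auto simp: algebra_simps intro!: mult_left_mono add_mono mult_mono)
  finally show ?thesis .
qed

lemma y_continuous_on: "continuous_on {0..} y"
  using y_deriv by (auto intro: has_vector_derivative_continuous simp: continuous_on_eq_continuous_within)

lemma euler_polygon_approximation:
  assumes inv: "\<And>a w k. a \<in> Om \<Longrightarrow> w \<in> U \<Longrightarrow> 0 < k \<Longrightarrow> k \<le> k0 \<Longrightarrow> a + k *\<^sub>R f a w \<in> Om"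
    and y0: "y 0 \<in> Om" and T: "0 < T"
  obtains C where "\<And>N. 0 < N \<Longrightarrow> T / real N \<le> k0 \<Longrightarrow> \<exists>z\<in>Om. norm (y T - z) \<le> C / real N"
proof -
  have "compact (y ` {0..T})"
    using continuous_on_subset[OF y_continuous_on] by (intro compact_continuous_image) auto
  then have "bounded (y ` {0..T})" by (rule compact_imp_bounded)
  then obtain Y0 where "\<forall>x\<in>y ` {0..T}. norm x \<le> Y0" unfolding bounded_iff by blast
  then have Y0: "\<And>t. t \<in> {0..T} \<Longrightarrow> norm (y t) \<le> Y0" by blast
  define R where "R = norm (f (y 0) (u 0)) + L_f * (2 * Y0 + L_u * T)"
  have R: "norm (f (y t) (u t)) \<le> R" if t: "t \<in> {0..T}" for t
  proof -
    have "norm (y t - y 0) \<le> 2 * Y0"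
      using norm_triangle_ineq4[of "y t" "y 0"] Y0[OF t] Y0[of 0] T by simp
    moreover have "L_u * \<bar>t - 0\<bar> \<le> L_u * T" using t L_u_nonneg by (intro mult_left_mono) auto
    ultimately have "L_f * (norm (y t - y 0) + L_u * \<bar>t - 0\<bar>) \<le> L_f * (2 * Y0 + L_u * T)"
      using L_f_nonneg by (intro mult_left_mono) auto
    then have "norm (f (y t) (u t) - f (y 0) (u 0)) \<le> L_f * (2 * Y0 + L_u * T)"
      using rhs_dist_le[of 0 t] t by simp
    then show ?thesis
      unfolding R_def using norm_triangle_sub[of "f (y t) (u t)" "f (y 0) (u 0)"] by linarith
  qed
  have "norm (f (y 0) (u 0)) \<le> R" using R[of 0] T by simp
  then have "0 \<le> R" using norm_ge_zero[of "f (y 0) (u 0)"] by linarith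
  have "(y has_vector_derivative f (y t) (u t)) (at t within {0..T})" if "t \<in> {0..T}" for t
    by (rule has_vector_derivative_within_subset[OF y_deriv]) (use that in auto)
  then have ylip: "R-lipschitz_on {0..T} y"
    using R \<open>0 \<le> R\<close> by (intro lipschitz_on_vector_derivative_bound) auto
  define C where "C = T * (T * L_f * (R + L_u)) * exp (L_f * T)"
  have "\<exists>z\<in>Om. norm (y T - z) \<le> C / real N" if N: "0 < N" "T / real N \<le> k0" for N
  proof -
    define k where "k = T / real N"
    have k: "0 < k" "k \<le> k0" "real N * k = T" using N T by (auto simp: k_def)
    define z where "z = rec_nat (y 0) (\<lambda>i zi. zi + k *\<^sub>R f zi (u (real i * k)))"
    have zS: "z (Suc i) = z i + k *\<^sub>R f (z i) (u (real i * k))" for i by (simp add: z_def)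
    have zOm: "z i \<in> Om" for i
    proof (induction i)
      case 0
      then show ?case using y0 by (simp add: z_def)
    next
      case (Suc i)
      then show ?case using inv u_mem k by (simp add: zS)
    qed
    have osc: "norm (f (y s) (u s) - f (y (real i * k)) (u (real i * k))) \<le> L_f * (R + L_u) * k"
      if i: "i < N" and s: "s \<in> {real i * k..real i * k + k}" for i s
    proof -
      have "real (Suc i) * k \<le> real N * k" using i k by (intro mult_right_mono) auto
      then have "real i * k + k \<le> T" using k by (simp add: algebra_simps)
      then show ?thesis using rhs_oscillation[OF ylip, of "real i * k" "real i * k + k" s] s k by simp
    qed
    have "norm (y (real N * k) - z N) \<le> real N * (k * (L_f * (R + L_u) * k + 0)) * (1 + k * L_f) ^ N"
    proof (rule euler_global_error[where G = "\<lambda>t. f (y t) (u t)" and \<Phi> = "\<lambda>i z. f z (u (real i * k))"])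
      show "0 \<le> L_f * (R + L_u) * k + 0" using k L_f_nonneg L_u_nonneg \<open>0 \<le> R\<close> by simp
      show "norm (f (y (real i * k)) (u (real i * k)) - f (z i) (u (real i * k)))
          \<le> L_f * norm (y (real i * k) - z i)" for i
        using f_lip_y u_mem k by simp
    qed (use y_deriv k L_f_nonneg osc in \<open>simp_all add: zS z_def\<close>)
    also have "\<dots> \<le> real N * (k * (L_f * (R + L_u) * k)) * exp (L_f * T)"
    proof -
      have "(1 + k * L_f) ^ N \<le> exp (k * L_f) ^ N"
        using k L_f_nonneg by (intro power_mono) (auto simp: add.commute exp_ge_add_one_self)
      also have "\<dots> = exp (L_f * T)" using k by (simp flip: exp_of_nat_mult add: algebra_simps)
      finally have "(1 + k * L_f) ^ N \<le> exp (L_f * T)" .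
      moreover have "0 \<le> real N * (k * (L_f * (R + L_u) * k))"
        using k L_f_nonneg L_u_nonneg \<open>0 \<le> R\<close> by simp
      ultimately show ?thesis using mult_left_mono by simp
    qed
    also have "\<dots> = C / real N" using k N by (simp add: C_def k_def field_simps)
    finally show ?thesis using zOm k(3) by auto
  qed
  then show ?thesis using that by blast
qed

lemma flow_invariant:
  assumes "closed Om" and inv: "\<And>a w k. a \<in> Om \<Longrightarrow> w \<in> U \<Longrightarrow> 0 < k \<Longrightarrow> k \<le> k0 \<Longrightarrow> a + k *\<^sub>R f a w \<in> Om"
    and "0 < k0" and y0: "y 0 \<in> Om" and "0 \<le> T"
  shows "y T \<in> Om"
proof (cases "T = 0")
  case True
  then show ?thesis using y0 by simp
next
  case False
  then have T: "0 < T" using \<open>0 \<le> T\<close> by simp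
  obtain C where C: "\<And>N. 0 < N \<Longrightarrow> T / real N \<le> k0 \<Longrightarrow> \<exists>z\<in>Om. norm (y T - z) \<le> C / real N"
    using euler_polygon_approximation[OF inv y0 T] by blast
  show ?thesis
  proof (rule iffD1[OF closed_approachable[OF \<open>closed Om\<close>]], intro allI impI)
    fix \<eta> :: real assume "0 < \<eta>"
    obtain N :: nat where N: "T / k0 < real N" "\<bar>C\<bar> / \<eta> < real N"
      using reals_Archimedean2[of "max (T / k0) (\<bar>C\<bar> / \<eta>)"] by auto
    have "0 < T / k0" using T \<open>0 < k0\<close> by simp
    then have "0 < N" using N(1) by linarith
    moreover have "T / real N \<le> k0" using N(1) \<open>0 < k0\<close> \<open>0 < N\<close> by (simp add: field_simps)
    ultimately obtain z where z: "z \<in> Om" "norm (y T - z) \<le> C / real N" using C by blast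
    have "\<bar>C\<bar> < \<eta> * real N" using N(2) \<open>0 < \<eta>\<close> by (simp add: field_simps)
    then have "C / real N < \<eta>" using \<open>0 < N\<close> by (simp add: field_simps)
    then have "dist z (y T) < \<eta>" using z(2) by (simp add: dist_norm norm_minus_commute)
    then show "\<exists>z\<in>Om. dist z (y T) < \<eta>" using z(1) by blast
  qed
qed

end

section \<open>Discounted sums\<close>

lemma one_minus_exp_inverse_le:
  fixes x :: real
  assumes x: "0 < x"
  shows "1 / (1 - exp (- x)) \<le> 1 / x + 1"
proof -
  have "(1 + x) * exp (- x) \<le> exp x * exp (- x)"
    by (rule mult_right_mono) (simp_all add: exp_ge_add_one_self)
  then have "(1 + x) * exp (- x) \<le> 1" by (simp add: exp_minus)
  then have "1 / (1 - exp (- x)) \<le> (1 + x) / x"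
    using x by (simp add: divide_simps algebra_simps)
  also have "\<dots> = 1 / x + 1" using x by (simp add: field_simps)
  finally show ?thesis .
qed

lemma mult_exp_neg_le_exp_half:
  fixes x :: real
  assumes x: "0 \<le> x"
  shows "x * exp (- x) \<le> exp (- (x / 2))"
proof -
  have "x \<le> (1 + x / 4)\<^sup>2"
    using zero_le_power2[of "1 - x / 4"] by (simp add: power2_eq_square algebra_simps)
  also have "\<dots> \<le> exp (x / 4) ^ 2"
    using x by (intro power_mono) (auto simp: add.commute exp_ge_add_one_self)
  also have "\<dots> = exp (x / 2)" by (simp add: power2_eq_square flip: exp_add)
  finally have "x * exp (- x) \<le> exp (x / 2) * exp (- x)" by (rule mult_right_mono) simp
  also have "\<dots> = exp (- (x / 2))" by (simp flip: exp_add)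
  finally show ?thesis .
qed

text \<open>The geometric decay of the discount beats the geometric growth \<open>(1 + h L)\<^sup>i\<close> of the
  Gronwall bound, which is where \<open>\<lambda> > L\<close> is used.\<close>

lemma discounted_gronwall_le:
  fixes lam L h c :: real
  assumes L: "0 \<le> L" "L < lam" and h: "0 < h" and c: "0 \<le> c"
  shows "real i * (h * c) * (1 + h * L) ^ i * exp (- lam * h) ^ i
    \<le> c / (lam - L) * exp (- ((lam - L) * h / 2)) ^ i"
proof -
  define \<mu> where "\<mu> = lam - L"
  have \<mu>: "0 < \<mu>" using L by (simp add: \<mu>_def)
  have "(1 + h * L) * exp (- lam * h) \<le> exp (h * L) * exp (- lam * h)"
    by (rule mult_right_mono) (simp_all add: add.commute exp_ge_add_one_self)
  also have "\<dots> = exp (- (\<mu> * h))" by (simp add: \<mu>_def algebra_simps flip: exp_add)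
  finally have "((1 + h * L) * exp (- lam * h)) ^ i \<le> exp (- (\<mu> * h)) ^ i"
    using h L by (intro power_mono) auto
  then have "(real i * (h * c)) * ((1 + h * L) ^ i * exp (- lam * h) ^ i)
      \<le> (real i * (h * c)) * exp (- (\<mu> * h)) ^ i"
    using h c by (intro mult_left_mono) (simp_all add: power_mult_distrib)
  also have "exp (- (\<mu> * h)) ^ i = exp (- (\<mu> * h * real i))"
    by (simp add: exp_of_nat_mult[symmetric] mult.commute)
  finally have "real i * (h * c) * (1 + h * L) ^ i * exp (- lam * h) ^ i
      \<le> real i * (h * c) * exp (- (\<mu> * h * real i))"
    by (simp add: mult.assoc)
  also have "\<dots> = c / \<mu> * ((\<mu> * h * real i) * exp (- (\<mu> * h * real i)))"
    using \<mu> by (simp add: field_simps)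
  also have "\<dots> \<le> c / \<mu> * exp (- (\<mu> * h * real i / 2))"
    using mult_exp_neg_le_exp_half[of "\<mu> * h * real i"] \<mu> h c by (intro mult_left_mono) auto
  also have "\<dots> = c / \<mu> * exp (- (\<mu> * h / 2)) ^ i"
    by (simp add: exp_of_nat_mult[symmetric] algebra_simps)
  finally show ?thesis by (simp add: \<mu>_def)
qed

lemma exp_discount_approx:
  fixes lam h t :: real
  assumes "0 < lam" "0 < h" "lam * h \<le> 1" and t: "real i * h \<le> t" "t \<le> real i * h + h"
  defines "q \<equiv> exp (- lam * h)"
  shows "\<bar>exp (- lam * t) - (1 - lam * h) ^ i\<bar> \<le> (q ^ i - q ^ Suc i) + (q ^ i - (1 - lam * h) ^ i)"
proof -
  have q: "q ^ j = exp (- lam * (real j * h))" for j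
    by (simp add: q_def exp_of_nat_mult[symmetric] algebra_simps)
  have "lam * t \<le> lam * (real i * h + h)" "lam * (real i * h) \<le> lam * t"
    using assms(1) t by (simp_all add: mult_left_mono)
  moreover have "q ^ Suc i = exp (- lam * (real i * h + h))"
    using q[of "Suc i"] by (simp add: distrib_right)
  ultimately have "q ^ Suc i \<le> exp (- lam * t)" "exp (- lam * t) \<le> q ^ i"
    by (simp_all add: q)
  moreover have "(1 - lam * h) ^ i \<le> q ^ i"
    using assms exp_ge_add_one_self[of "- lam * h"] by (intro power_mono) (auto simp: q_def)
  ultimately show ?thesis by (simp add: abs_le_iff)
qed

lemma div_one_minus_exp_le:
  fixes a h :: real
  assumes "0 < a" "0 < h"
  shows "h / (1 - exp (- (a * h))) \<le> 1 / a + h"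
proof -
  have "h / (1 - exp (- (a * h))) = h * (1 / (1 - exp (- (a * h))))" by simp
  also have "\<dots> \<le> h * (1 / (a * h) + 1)"
    using assms one_minus_exp_inverse_le[of "a * h"] by (intro mult_left_mono) auto
  also have "\<dots> = 1 / a + h" using assms by (simp add: field_simps)
  finally show ?thesis .
qed

lemma integral_atLeast_sums:
  fixes F :: "real \<Rightarrow> real"
  assumes cont: "continuous_on {0..} F" and bnd: "\<And>t. 0 \<le> t \<Longrightarrow> \<bar>F t\<bar> \<le> M * exp (- lam * t)"
    and lam: "0 < lam" and h: "0 < h"
  shows "(\<lambda>n. integral {real n * h..real n * h + h} F) sums integral {0..} F"
proof -
  have M: "0 \<le> M" using bnd[of 0] by simp
  define F_N where "F_N N t = (if t \<in> {..real N * h} then F t else 0)" for N :: nat and t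
  have ivl: "{..a} \<inter> {0..} = {0..a}" for a :: real by auto
  have int: "F integrable_on {a..b}" if "0 \<le> a" for a b
    by (rule integrable_continuous_interval[OF continuous_on_subset[OF cont]]) (use that in auto)
  have "(\<lambda>N. integral {0..} (F_N N)) \<longlonglongrightarrow> integral {0..} F"
  proof (rule dominated_convergence(2))
    show "F_N N integrable_on {0..}" for N
      unfolding F_N_def integrable_restrict_Int ivl using int[of 0] by simp
    show "(\<lambda>t. M * exp (- lam * t)) integrable_on {0..}"
      using integrable_on_cmult_left[OF integrable_on_exp_minus_to_infinity[OF lam, of 0], of M] by simp
    show "norm (F_N N t) \<le> M * exp (- lam * t)" if "t \<in> {0..}" for N t
      using bnd[of t] that M by (auto simp: F_N_def)
    show "(\<lambda>N. F_N N t) \<longlonglongrightarrow> F t" if "t \<in> {0..}" for t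
    proof (rule tendsto_eventually)
      obtain N0 :: nat where "t / h < real N0" using reals_Archimedean2 by blast
      then have "t < real N0 * h" using h by (simp add: field_simps)
      moreover have "real N0 * h \<le> real N * h" if "N0 \<le> N" for N
        using that h by (intro mult_right_mono) auto
      ultimately have N0: "t \<le> real N * h" if "N0 \<le> N" for N
        using that by (meson less_le_trans less_imp_le)
      show "\<forall>\<^sub>F N in sequentially. F_N N t = F t"
      proof (rule eventually_sequentiallyI[of N0])
        fix N assume "N0 \<le> N"
        then show "F_N N t = F t" using N0 by (simp add: F_N_def)
      qed
    qed
  qed
  moreover have "integral {0..} (F_N N) = (\<Sum>n<N. integral {real n * h..real n * h + h} F)" for N
  proof -
    have "integral {0..} (F_N N) = integral {0..real N * h} F"
      unfolding F_N_def Henstock_Kurzweil_Integration.integral_restrict_Int ivl ..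
    also have "\<dots> = (\<Sum>n<N. integral {real n * h..real n * h + h} F)"
    proof (induction N)
      case (Suc N)
      have "integral {0..real N * h} F + integral {real N * h..real N * h + h} F
          = integral {0..real N * h + h} F"
        using h int[of 0] by (intro Henstock_Kurzweil_Integration.integral_combine) auto
      then show ?case using Suc by (simp add: algebra_simps)
    qed simp
    finally show ?thesis .
  qed
  ultimately show ?thesis unfolding sums_def by simp
qed

lemma discounted_error_series:
  fixes lam h q r P A M :: real
  assumes lam: "0 < lam" "0 < h" "lam * h \<le> 1" and q: "0 \<le> q" "q < 1" and r: "0 \<le> r" "r < 1"
  shows "(\<lambda>i. h * (P * q ^ i + A * r ^ i + M * ((q ^ i - q ^ Suc i) + (q ^ i - (1 - lam * h) ^ i))))
    sums (P * (h / (1 - q)) + A * (h / (1 - r)) + M * h + M * (h / (1 - q) - 1 / lam))"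
proof -
  have sq: "(\<lambda>i. q ^ i) sums (1 / (1 - q))" and sr: "(\<lambda>i. r ^ i) sums (1 / (1 - r))"
    using geometric_sums[of q] geometric_sums[of r] q r by simp_all
  have "(\<lambda>i. (1 - lam * h) ^ i) sums (1 / (1 - (1 - lam * h)))"
    using lam by (intro geometric_sums) (auto simp: abs_if)
  then have s\<delta>: "(\<lambda>i. (1 - lam * h) ^ i) sums (1 / (lam * h))" by simp
  have telescope: "(\<lambda>i. q ^ i - q ^ Suc i) sums 1"
    using sums_mult[OF sq, of "1 - q"] q by (simp add: algebra_simps)
  have "(\<lambda>i. h * (P * q ^ i + A * r ^ i + M * ((q ^ i - q ^ Suc i) + (q ^ i - (1 - lam * h) ^ i))))
      sums (h * (P * (1 / (1 - q)) + A * (1 / (1 - r)) + M * (1 + (1 / (1 - q) - 1 / (lam * h)))))"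
    by (intro sums_mult sums_add sums_diff telescope sq sr s\<delta>)
  moreover have "h * (P * (1 / (1 - q)) + A * (1 / (1 - r)) + M * (1 + (1 / (1 - q) - 1 / (lam * h))))
      = P * (h / (1 - q)) + A * (h / (1 - r)) + M * h + M * (h / (1 - q) - 1 / lam)"
    using lam q r by (simp add: field_simps)
  ultimately show ?thesis by simp
qed

section \<open>Error of the fully discrete cost\<close>

locale discretized_control_problem = controlled_ode f U L_f u L_u y
  for f :: "'v::euclidean_space \<Rightarrow> 'w::real_normed_vector \<Rightarrow> 'v" and U L_f u L_u y +
  fixes g :: "'v \<Rightarrow> 'w \<Rightarrow> real" and L_g M_f M_g :: real
    and Om :: "'v set" and \<T> :: "'v set set" and lam Lb h :: real
  assumes g_lip_y: "\<And>a b w. w \<in> U \<Longrightarrow> \<bar>g a w - g b w\<bar> \<le> L_g * norm (a - b)"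
    and g_lip_u: "\<And>a w w'. w \<in> U \<Longrightarrow> w' \<in> U \<Longrightarrow> \<bar>g a w - g a w'\<bar> \<le> L_g * norm (w - w')"
    and tri: "regular_triangulation \<T> Om" and Om: "convex Om" "closed Om"
    and M_f: "\<And>a w. a \<in> Om \<Longrightarrow> w \<in> U \<Longrightarrow> norm (f a w) \<le> M_f"
    and M_g: "\<And>a w. a \<in> Om \<Longrightarrow> w \<in> U \<Longrightarrow> \<bar>g a w\<bar> \<le> M_g"
    and invariant: "\<And>a w k. a \<in> Om \<Longrightarrow> w \<in> U \<Longrightarrow> 0 < k \<Longrightarrow> k \<le> h \<Longrightarrow> a + k *\<^sub>R f a w \<in> Om"
    and interp_lip: "\<And>w. w \<in> U \<Longrightarrow> Lb-lipschitz_on Om (interp \<T> (\<lambda>a. f a w))"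
    and Lb_less: "Lb < lam" and h: "0 < h" "lam * h \<le> 1 / 2"
    and y0: "y 0 \<in> Om"
begin

abbreviation "u_grid i \<equiv> u (real i * h)"

abbreviation "y_disc \<equiv> disc_traj \<T> f h (y 0) u_grid"

lemma Lb_nonneg: "0 \<le> Lb"
  using interp_lip[OF u_mem[of 0]] lipschitz_on_nonneg by simp

lemma lam_pos: "0 < lam"
  using Lb_nonneg Lb_less by linarith

lemma L_g_nonneg: "0 \<le> L_g"
proof -
  obtain b :: 'v where "b \<in> Basis" using nonempty_Basis by blast
  then have "\<bar>g b (u 0) - g 0 (u 0)\<bar> \<le> L_g" using g_lip_y[OF u_mem, of 0 b 0] by simp
  then show ?thesis using abs_ge_zero[of "g b (u 0) - g 0 (u 0)"] by linarith
qed

lemma M_f_nonneg: "0 \<le> M_f"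
  using M_f[OF y0 u_mem[of 0]] norm_ge_zero[of "f (y 0) (u 0)"] by linarith

lemma M_g_nonneg: "0 \<le> M_g"
  using M_g[OF y0 u_mem[of 0]] abs_ge_zero[of "g (y 0) (u 0)"] by linarith

lemma y_mem: "0 \<le> t \<Longrightarrow> y t \<in> Om"
  using flow_invariant[OF Om(2) invariant h(1) y0] by blast

lemma y_lipschitz: "M_f-lipschitz_on {0..} y"
  using y_deriv M_f[OF y_mem u_mem] M_f_nonneg by (intro lipschitz_on_vector_derivative_bound) auto

lemma y_disc_mem: "y_disc i \<in> Om"
proof (induction i)
  case (Suc i)
  have "y_disc i + h *\<^sub>R interp \<T> (\<lambda>a. f a (u_grid i)) (y_disc i) \<in> Om"
    using Suc invariant u_mem h by (intro interp_euler_step_mem[OF tri Om(1)]) auto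
  then show ?case by simp
qed (simp add: y0)

lemma y_disc_error:
  "norm (y (real i * h) - y_disc i)
    \<le> real i * (h * (L_f * (M_f + L_u) * h + L_f * mesh \<T>)) * (1 + h * Lb) ^ i"
proof (rule euler_global_error[where G = "\<lambda>t. f (y t) (u t)"
      and \<Phi> = "\<lambda>i. interp \<T> (\<lambda>a. f a (u_grid i))"])
  show "0 \<le> L_f * (M_f + L_u) * h + L_f * mesh \<T>"
    using L_f_nonneg M_f_nonneg L_u_nonneg h mesh_nonneg[OF tri y0] by simp
  show "norm (f (y s) (u s) - f (y (real j * h)) (u (real j * h))) \<le> L_f * (M_f + L_u) * h"
    if "s \<in> {real j * h..real j * h + h}" for j s
    using rhs_oscillation[OF y_lipschitz, of "real j * h" "real j * h + h" s] that h by auto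
  show "norm (f (y (real j * h)) (u (real j * h)) - interp \<T> (\<lambda>a. f a (u_grid j)) (y (real j * h)))
      \<le> L_f * mesh \<T>" for j
    using interp_error_le[OF tri y_mem, of "real j * h" L_f "\<lambda>a. f a (u_grid j)"] f_lip_y u_mem
      L_f_nonneg h by (simp add: norm_minus_commute)
  show "norm (interp \<T> (\<lambda>a. f a (u_grid j)) (y (real j * h)) - interp \<T> (\<lambda>a. f a (u_grid j)) (y_disc j))
      \<le> Lb * norm (y (real j * h) - y_disc j)" for j
    using lipschitz_on_normD[OF interp_lip[OF u_mem] y_mem y_disc_mem] h by simp
qed (use y_deriv h Lb_nonneg in auto)

lemma running_cost_continuous: "continuous_on {0..} (\<lambda>t. g (y t) (u t) * exp (- lam * t))"
proof -
  have "(L_g * (M_f + L_u))-lipschitz_on {0..} (\<lambda>t. g (y t) (u t))"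
  proof (rule lipschitz_onI)
    fix s t :: real assume "s \<in> {0..}" "t \<in> {0..}"
    then have "\<bar>g (y s) (u s) - g (y t) (u t)\<bar> \<le> L_g * (norm (y s - y t) + norm (u s - u t))"
      using lipschitz_pair_norm_le[of U g L_g] g_lip_y g_lip_u u_mem by simp
    also have "\<dots> \<le> L_g * (M_f * dist s t + L_u * dist s t)"
    proof (intro mult_left_mono add_mono)
      show "norm (y s - y t) \<le> M_f * dist s t"
        using lipschitz_on_normD[OF y_lipschitz] \<open>s \<in> {0..}\<close> \<open>t \<in> {0..}\<close> by (simp add: dist_real_def)
      show "norm (u s - u t) \<le> L_u * dist s t"
        using u_lip[of t s] \<open>s \<in> {0..}\<close> \<open>t \<in> {0..}\<close> by (simp add: dist_real_def)
    qed (rule L_g_nonneg)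
    finally show "dist (g (y s) (u s)) (g (y t) (u t)) \<le> L_g * (M_f + L_u) * dist s t"
      by (simp add: dist_real_def algebra_simps)
  qed (use L_g_nonneg M_f_nonneg L_u_nonneg in simp)
  then show ?thesis by (intro continuous_intros lipschitz_on_continuous_on)
qed

lemma running_cost_error:
  assumes t: "t \<in> {real i * h..real i * h + h}"
  shows "\<bar>g (y t) (u t) - interp \<T> (\<lambda>a. g a (u_grid i)) (y_disc i)\<bar>
    \<le> L_g * ((M_f + L_u) * h + mesh \<T> + norm (y (real i * h) - y_disc i))"
proof -
  have i0: "0 \<le> real i * h" using h by simp
  have "real i * h \<le> t" "t \<le> real i * h + h" using t by simp_all
  then have t0: "0 \<le> real i * h" "0 \<le> t" "\<bar>t - real i * h\<bar> \<le> h"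
    using i0 unfolding abs_le_iff by linarith+
  have "norm (y t - y (real i * h)) \<le> M_f * \<bar>t - real i * h\<bar>"
    using lipschitz_on_normD[OF y_lipschitz] t0 by simp
  also have "\<dots> \<le> M_f * h" using t0(3) M_f_nonneg by (rule mult_left_mono)
  finally have "norm (y t - y_disc i) \<le> M_f * h + norm (y (real i * h) - y_disc i)"
    by (rule norm_diff_triangle_le) simp
  moreover have "norm (u t - u_grid i) \<le> L_u * \<bar>t - real i * h\<bar>" using u_lip[OF t0(1,2)] by simp
  then have "norm (u t - u_grid i) \<le> L_u * h"
    using mult_left_mono[OF t0(3) L_u_nonneg] by linarith
  ultimately have "norm (y t - y_disc i) + norm (u t - u_grid i)
      \<le> M_f * h + norm (y (real i * h) - y_disc i) + L_u * h" by linarith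
  then have "L_g * (norm (y t - y_disc i) + norm (u t - u_grid i))
      \<le> L_g * (M_f * h + norm (y (real i * h) - y_disc i) + L_u * h)"
    using L_g_nonneg by (rule mult_left_mono)
  moreover have "\<bar>g (y t) (u t) - g (y_disc i) (u_grid i)\<bar>
      \<le> L_g * (norm (y t - y_disc i) + norm (u t - u_grid i))"
    using lipschitz_pair_norm_le[of U g L_g "u t" "u_grid i" "y t" "y_disc i"] g_lip_y g_lip_u
      u_mem[OF t0(2)] u_mem[OF t0(1)] by simp
  moreover have "\<bar>interp \<T> (\<lambda>a. g a (u_grid i)) (y_disc i) - g (y_disc i) (u_grid i)\<bar> \<le> L_g * mesh \<T>"
    using interp_error_le[OF tri y_disc_mem, of L_g "\<lambda>a. g a (u_grid i)"] g_lip_y u_mem t0 L_g_nonneg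
    by simp
  moreover have "L_g * (M_f * h + norm (y (real i * h) - y_disc i) + L_u * h) + L_g * mesh \<T>
      = L_g * ((M_f + L_u) * h + mesh \<T> + norm (y (real i * h) - y_disc i))"
    by (simp add: algebra_simps)
  ultimately show ?thesis
    using dist_triangle2[of "g (y t) (u t)" "interp \<T> (\<lambda>a. g a (u_grid i)) (y_disc i)"
        "g (y_disc i) (u_grid i)"]
    by (simp add: dist_real_def)
qed

lemma interval_cost_error:
  fixes i :: nat
  defines "q \<equiv> exp (- lam * h)" and "\<delta> \<equiv> 1 - lam * h"
    and "b \<equiv> interp \<T> (\<lambda>a. g a (u_grid i)) (y_disc i)"
  shows "\<bar>integral {real i * h..real i * h + h} (\<lambda>t. g (y t) (u t) * exp (- lam * t)) - h * (\<delta> ^ i * b)\<bar>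
    \<le> h * (L_g * ((M_f + L_u) * h + mesh \<T> + norm (y (real i * h) - y_disc i)) * q ^ i
      + M_g * ((q ^ i - q ^ Suc i) + (q ^ i - \<delta> ^ i)))"
proof -
  define W where "W = L_g * ((M_f + L_u) * h + mesh \<T> + norm (y (real i * h) - y_disc i)) * q ^ i
      + M_g * ((q ^ i - q ^ Suc i) + (q ^ i - \<delta> ^ i))"
  have "norm b \<le> M_g"
    unfolding b_def by (rule interp_norm_le[OF tri y_disc_mem]) (use M_g u_mem h in simp)
  then have "\<bar>b\<bar> \<le> M_g" by simp
  have pointwise: "\<bar>g (y t) (u t) * exp (- lam * t) - \<delta> ^ i * b\<bar> \<le> W"
    if t: "t \<in> {real i * h..real i * h + h}" for t
  proof -
    have "exp (- lam * t) \<le> q ^ i"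
      using t lam_pos by (simp add: q_def exp_of_nat_mult[symmetric] algebra_simps)
    moreover have "\<bar>exp (- lam * t) - \<delta> ^ i\<bar> \<le> (q ^ i - q ^ Suc i) + (q ^ i - \<delta> ^ i)"
      using exp_discount_approx[of lam h i t] lam_pos h t by (simp add: q_def \<delta>_def)
    ultimately have "\<bar>(g (y t) (u t) - b) * exp (- lam * t)\<bar> + \<bar>b * (exp (- lam * t) - \<delta> ^ i)\<bar> \<le> W"
      using running_cost_error[OF t] \<open>\<bar>b\<bar> \<le> M_g\<close> L_g_nonneg
      unfolding W_def b_def abs_mult
      by (intro add_mono mult_mono) auto
    then show ?thesis by (simp add: algebra_simps abs_triangle_ineq[THEN order_trans])
  qed
  have F: "continuous_on {real i * h..real i * h + h} (\<lambda>t. g (y t) (u t) * exp (- lam * t))"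
    by (rule continuous_on_subset[OF running_cost_continuous]) (use h in auto)
  have "integral {real i * h..real i * h + h} (\<lambda>t. g (y t) (u t) * exp (- lam * t) - \<delta> ^ i * b)
      = integral {real i * h..real i * h + h} (\<lambda>t. g (y t) (u t) * exp (- lam * t))
        - integral {real i * h..real i * h + h} (\<lambda>t. \<delta> ^ i * b)"
    by (rule integral_diff[OF integrable_continuous_interval[OF F] integrable_const_ivl])
  also have "integral {real i * h..real i * h + h} (\<lambda>t. \<delta> ^ i * b) = h * (\<delta> ^ i * b)"
    using h by simp
  finally have "integral {real i * h..real i * h + h} (\<lambda>t. g (y t) (u t) * exp (- lam * t)) - h * (\<delta> ^ i * b)
      = integral {real i * h..real i * h + h} (\<lambda>t. g (y t) (u t) * exp (- lam * t) - \<delta> ^ i * b)"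
    by simp
  also have "\<bar>\<dots>\<bar> \<le> W * (real i * h + h - real i * h)"
  proof (rule integral_bound[where 'a = real, simplified real_norm_def])
    show "continuous_on {real i * h..real i * h + h} (\<lambda>t. g (y t) (u t) * exp (- lam * t) - \<delta> ^ i * b)"
      by (rule continuous_on_diff[OF F continuous_on_const])
  qed (use h pointwise in auto)
  finally show ?thesis by (simp add: W_def mult.commute)
qed

lemma cost_error_le:
  "\<bar>J_cont g lam y u - J_disc \<T> f g lam h (y 0) u_grid\<bar>
    \<le> (h + mesh \<T>) * (L_g * (M_f + L_u + 1) * (3 / (2 * lam))
      + L_g * (L_f * (M_f + L_u + 1)) / (lam - Lb) * (2 / (lam - Lb) + 1 / (2 * lam)) + 2 * M_g)"
proof -
  let ?F = "\<lambda>t. g (y t) (u t) * exp (- lam * t)"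
  define k where "k = mesh \<T>"
  define \<mu> where "\<mu> = lam - Lb"
  define q where "q = exp (- lam * h)"
  define r where "r = exp (- (\<mu> * h / 2))"
  define \<delta> where "\<delta> = 1 - lam * h"
  define b where "b i = interp \<T> (\<lambda>a. g a (u_grid i)) (y_disc i)" for i
  define c where "c = L_f * (M_f + L_u) * h + L_f * k"
  define P where "P = L_g * ((M_f + L_u) * h + k)"
  define A where "A = L_g * c / \<mu>"
  have \<mu>: "0 < \<mu>" using Lb_less by (simp add: \<mu>_def)
  have k: "0 \<le> k" using mesh_nonneg[OF tri y0] by (simp add: k_def)
  have c: "0 \<le> c" using L_f_nonneg M_f_nonneg L_u_nonneg h k by (simp add: c_def)
  have "0 \<le> \<delta>" "\<delta> < 1" using h lam_pos by (auto simp: \<delta>_def)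
  have "0 < q" "q < 1" "0 < r" "r < 1" using lam_pos h \<mu> by (simp_all add: q_def r_def)
  have "norm (b i) \<le> M_g" for i
    unfolding b_def by (rule interp_norm_le[OF tri y_disc_mem]) (use M_g u_mem h in simp)
  then have b: "\<bar>b i\<bar> \<le> M_g" for i by simp
  have "summable (\<lambda>i. M_g * \<delta> ^ i)"
    using \<open>0 \<le> \<delta>\<close> \<open>\<delta> < 1\<close> by (intro summable_mult summable_geometric) simp
  moreover have "norm (\<delta> ^ i * b i) \<le> M_g * \<delta> ^ i" for i
  proof -
    have "\<bar>b i\<bar> * \<delta> ^ i \<le> M_g * \<delta> ^ i" using b[of i] \<open>0 \<le> \<delta>\<close> by (intro mult_right_mono) simp_all
    then show ?thesis using \<open>0 \<le> \<delta>\<close> by (simp add: abs_mult mult.commute)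
  qed
  ultimately have "summable (\<lambda>i. \<delta> ^ i * b i)"
    by (rule summable_comparison_test'[where N = 0])
  then have "(\<lambda>i. h * (\<delta> ^ i * b i)) sums J_disc \<T> f g lam h (y 0) u_grid"
    unfolding J_disc_def \<delta>_def b_def by (intro sums_mult summable_sums)
  moreover have "(\<lambda>i. integral {real i * h..real i * h + h} ?F) sums J_cont g lam y u"
    unfolding J_cont_def
  proof (rule integral_atLeast_sums[OF running_cost_continuous _ lam_pos h(1)])
    show "\<bar>?F t\<bar> \<le> M_g * exp (- lam * t)" if "0 \<le> t" for t
      using M_g[OF y_mem[OF that] u_mem[OF that]] by (simp add: abs_mult mult_right_mono)
  qed
  ultimately have diff_sums: "(\<lambda>i. integral {real i * h..real i * h + h} ?F - h * (\<delta> ^ i * b i))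
      sums (J_cont g lam y u - J_disc \<T> f g lam h (y 0) u_grid)"
    by (intro sums_diff)
  have weighted: "L_g * norm (y (real i * h) - y_disc i) * q ^ i \<le> A * r ^ i" for i
  proof -
    have "norm (y (real i * h) - y_disc i) * q ^ i \<le> real i * (h * c) * (1 + h * Lb) ^ i * q ^ i"
      using y_disc_error[of i] \<open>0 < q\<close> by (intro mult_right_mono) (simp_all add: c_def k_def)
    also have "\<dots> \<le> c / \<mu> * r ^ i"
      unfolding q_def r_def \<mu>_def by (rule discounted_gronwall_le[OF Lb_nonneg Lb_less h(1) c])
    finally have "L_g * (norm (y (real i * h) - y_disc i) * q ^ i) \<le> L_g * (c / \<mu> * r ^ i)"
      using L_g_nonneg by (rule mult_left_mono)
    then show ?thesis by (simp add: A_def mult.assoc)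
  qed
  have "\<bar>J_cont g lam y u - J_disc \<T> f g lam h (y 0) u_grid\<bar>
      \<le> P * (h / (1 - q)) + A * (h / (1 - r)) + M_g * h + M_g * (h / (1 - q) - 1 / lam)"
  proof (rule norm_sums_le[OF diff_sums _, simplified real_norm_def])
    show "(\<lambda>i. h * (P * q ^ i + A * r ^ i + M_g * ((q ^ i - q ^ Suc i) + (q ^ i - \<delta> ^ i))))
        sums (P * (h / (1 - q)) + A * (h / (1 - r)) + M_g * h + M_g * (h / (1 - q) - 1 / lam))"
      unfolding \<delta>_def using lam_pos h \<open>0 < q\<close> \<open>q < 1\<close> \<open>0 < r\<close> \<open>r < 1\<close>
      by (intro discounted_error_series) auto
    fix i
    have "\<bar>integral {real i * h..real i * h + h} ?F - h * (\<delta> ^ i * b i)\<bar>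
        \<le> h * (L_g * ((M_f + L_u) * h + k + norm (y (real i * h) - y_disc i)) * q ^ i
          + M_g * ((q ^ i - q ^ Suc i) + (q ^ i - \<delta> ^ i)))"
      unfolding q_def \<delta>_def b_def k_def by (rule interval_cost_error)
    also have "\<dots> \<le> h * (P * q ^ i + A * r ^ i + M_g * ((q ^ i - q ^ Suc i) + (q ^ i - \<delta> ^ i)))"
      using weighted[of i] h by (intro mult_left_mono) (simp_all add: P_def algebra_simps)
    finally show "\<bar>integral {real i * h..real i * h + h} ?F - h * (\<delta> ^ i * b i)\<bar>
        \<le> h * (P * q ^ i + A * r ^ i + M_g * ((q ^ i - q ^ Suc i) + (q ^ i - \<delta> ^ i)))" .
  qed
  also have "\<dots> \<le> P * (3 / (2 * lam)) + A * (2 / \<mu> + 1 / (2 * lam)) + 2 * M_g * (h + k)"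
  proof -
    have "h / (1 - q) \<le> 1 / lam + h"
      using div_one_minus_exp_le[OF lam_pos h(1)] by (simp add: q_def)
    moreover have "h / (1 - r) \<le> 2 / \<mu> + h"
      using div_one_minus_exp_le[of "\<mu> / 2" h] \<mu> h by (simp add: r_def)
    moreover have "h \<le> 1 / (2 * lam)" using h lam_pos by (simp add: field_simps)
    moreover have "1 / lam + 1 / (2 * lam) = 3 / (2 * lam)" by (simp add: field_simps)
    ultimately have "h / (1 - q) \<le> 3 / (2 * lam)" "h / (1 - r) \<le> 2 / \<mu> + 1 / (2 * lam)"
      "h / (1 - q) - 1 / lam \<le> h"
      by linarith+
    moreover have "0 \<le> P" "0 \<le> A"
      using L_g_nonneg c \<mu> M_f_nonneg L_u_nonneg h k by (simp_all add: P_def A_def)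
    ultimately have "P * (h / (1 - q)) \<le> P * (3 / (2 * lam))"
      "A * (h / (1 - r)) \<le> A * (2 / \<mu> + 1 / (2 * lam))"
      "M_g * (h / (1 - q) - 1 / lam) \<le> M_g * h"
      using M_g_nonneg by (simp_all only: mult_left_mono)
    moreover have "M_g * h \<le> M_g * (h + k)" using M_g_nonneg k by (simp add: mult_left_mono)
    ultimately show ?thesis by linarith
  qed
  also have "\<dots> \<le> (h + k) * (L_g * (M_f + L_u + 1) * (3 / (2 * lam))
      + L_g * (L_f * (M_f + L_u + 1)) / \<mu> * (2 / \<mu> + 1 / (2 * lam)) + 2 * M_g)"
  proof -
    define c\<^sub>1 where "c\<^sub>1 = 3 / (2 * lam)"
    define c\<^sub>2 where "c\<^sub>2 = 2 / \<mu> + 1 / (2 * lam)"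
    define X\<^sub>1 where "X\<^sub>1 = L_g * (M_f + L_u + 1)"
    define X\<^sub>2 where "X\<^sub>2 = L_g * (L_f * (M_f + L_u + 1)) / \<mu>"
    have "0 \<le> c\<^sub>1" "0 \<le> c\<^sub>2" using lam_pos \<mu> by (simp_all add: c\<^sub>1_def c\<^sub>2_def)
    have base: "(M_f + L_u) * h + k \<le> (M_f + L_u + 1) * (h + k)"
      using M_f_nonneg L_u_nonneg h k by (simp add: algebra_simps)
    then have "P \<le> X\<^sub>1 * (h + k)"
      using mult_left_mono[OF base L_g_nonneg] by (simp add: P_def X\<^sub>1_def mult.assoc)
    then have P: "P * c\<^sub>1 \<le> X\<^sub>1 * (h + k) * c\<^sub>1"
      using \<open>0 \<le> c\<^sub>1\<close> by (rule mult_right_mono)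
    have "c \<le> L_f * (M_f + L_u + 1) * (h + k)"
      using mult_left_mono[OF base L_f_nonneg] by (simp add: c_def algebra_simps)
    then have "L_g * c \<le> L_g * (L_f * (M_f + L_u + 1) * (h + k))"
      using L_g_nonneg by (rule mult_left_mono)
    then have "L_g * c / \<mu> \<le> L_g * (L_f * (M_f + L_u + 1) * (h + k)) / \<mu>"
      using \<mu> by (simp add: divide_right_mono)
    then have "A \<le> X\<^sub>2 * (h + k)" by (simp add: A_def X\<^sub>2_def mult.assoc)
    then have A: "A * c\<^sub>2 \<le> X\<^sub>2 * (h + k) * c\<^sub>2"
      using \<open>0 \<le> c\<^sub>2\<close> by (rule mult_right_mono)
    have "(h + k) * (X\<^sub>1 * c\<^sub>1 + X\<^sub>2 * c\<^sub>2 + 2 * M_g) = X\<^sub>1 * (h + k) * c\<^sub>1 + X\<^sub>2 * (h + k) * c\<^sub>2 + 2 * M_g * (h + k)"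
      by (simp add: algebra_simps)
    with P A show ?thesis unfolding c\<^sub>1_def c\<^sub>2_def X\<^sub>1_def X\<^sub>2_def by linarith
  qed
  finally show ?thesis by (simp add: k_def \<mu>_def)
qed

end

theorem lemma2:
  fixes f :: "real^'n \<Rightarrow> real^'m \<Rightarrow> real^'n"
    and g :: "real^'n \<Rightarrow> real^'m \<Rightarrow> real"
    and Om :: "(real^'n) set" and U :: "(real^'m) set"
    and lam L_f L_g M_f M_g L_u C_I :: real
  assumes lam_pos: "lam > 0"
    and U: "compact U" "convex U"
    and f_lip_y: "\<And>y y' u. u \<in> U \<Longrightarrow> norm (f y u - f y' u) \<le> L_f * norm (y - y')"
    and f_lip_u: "\<And>y u u'. u \<in> U \<Longrightarrow> u' \<in> U \<Longrightarrow> norm (f y u - f y u') \<le> L_f * norm (u - u')"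
    and g_lip_y: "\<And>y y' u. u \<in> U \<Longrightarrow> \<bar>g y u - g y' u\<bar> \<le> L_g * norm (y - y')"
    and g_lip_u: "\<And>y u u'. u \<in> U \<Longrightarrow> u' \<in> U \<Longrightarrow> \<bar>g y u - g y u'\<bar> \<le> L_g * norm (u - u')"
    and f_cont: "continuous_on UNIV (\<lambda>(y, u). f y u)"
    and g_cont: "continuous_on UNIV (\<lambda>(y, u). g y u)"
    and Om: "polyhedron Om" "bounded Om"
    and M_f: "\<And>y u i. y \<in> Om \<Longrightarrow> u \<in> U \<Longrightarrow> \<bar>f y u $ i\<bar> \<le> M_f"
    and M_g: "\<And>y u. y \<in> Om \<Longrightarrow> u \<in> U \<Longrightarrow> \<bar>g y u\<bar> \<le> M_g"
    and invariant: "\<And>y u h. y \<in> Om \<Longrightarrow> u \<in> U \<Longrightarrow> 0 < h \<Longrightarrow> h \<le> 1 / (2 * lam) \<Longrightarrow> y + h *\<^sub>R f y u \<in> Om"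
    and lam_big: "lam > C_I * real CARD('n) * L_f"
  shows "\<exists>C>0. \<forall>\<T> h u y y0.
     regular_triangulation \<T> Om \<longrightarrow>
     (\<forall>S\<in>\<T>. \<forall>z\<in>interior S. \<forall>v\<in>U. \<forall>j. \<forall>D.
         GDERIV (interp \<T> (\<lambda>x. f x v $ j)) z :> D \<longrightarrow> norm D \<le> C_I * sqrt (real CARD('n)) * L_f) \<longrightarrow>
     0 < h \<longrightarrow> h \<le> 1 / (2 * lam) \<longrightarrow>
     (\<forall>t\<ge>0. u t \<in> U) \<longrightarrow>
     (\<lambda>t. (norm (u t))\<^sup>2) integrable_on {0..} \<longrightarrow>
     (\<forall>s\<ge>0. \<forall>t\<ge>0. norm (u t - u s) \<le> L_u * \<bar>t - s\<bar>) \<longrightarrow>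
     y0 \<in> Om \<longrightarrow>
     y 0 = y0 \<longrightarrow>
     (\<forall>t\<ge>0. (y has_vector_derivative f (y t) (u t)) (at t within {0..})) \<longrightarrow>
     \<bar>J_cont g lam y u - J_disc \<T> f g lam h y0 (\<lambda>i. u (real i * h))\<bar> \<le> C * (h + mesh \<T>)"
proof -
  define Lb where "Lb = max (C_I * real CARD('n) * L_f) 0"
  define M where "M = sqrt (real CARD('n)) * M_f"
  define C where "C = L_g * (M + L_u + 1) * (3 / (2 * lam))
    + L_g * (L_f * (M + L_u + 1)) / (lam - Lb) * (2 / (lam - Lb) + 1 / (2 * lam)) + 2 * M_g"
  have Lb: "Lb < lam" using lam_pos lam_big by (simp add: Lb_def)
  have Om_convex: "convex Om" and Om_closed: "closed Om"
    using Om(1) by (simp_all add: polyhedron_imp_convex polyhedron_imp_closed)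
  have M_f_norm: "norm (f a w) \<le> M" if "a \<in> Om" "w \<in> U" for a w
    unfolding M_def by (rule norm_le_sqrt_card_mult) (rule M_f[OF that])
  have sqrt_card: "sqrt (real CARD('n)) * (C_I * sqrt (real CARD('n)) * L_f) = C_I * real CARD('n) * L_f"
  proof -
    have "sqrt (real CARD('n)) * (C_I * sqrt (real CARD('n)) * L_f)
        = C_I * L_f * (sqrt (real CARD('n)) * sqrt (real CARD('n)))" by (simp only: mult_ac)
    then show ?thesis by simp
  qed
  show ?thesis
  proof (intro exI[of _ "max 1 C"] conjI allI impI)
    show "0 < max 1 C" by simp
    fix \<T> h u y y0
    assume tri: "regular_triangulation \<T> Om"
      and grad: "\<forall>S\<in>\<T>. \<forall>z\<in>interior S. \<forall>v\<in>U. \<forall>j. \<forall>D.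
         GDERIV (interp \<T> (\<lambda>x. f x v $ j)) z :> D \<longrightarrow> norm D \<le> C_I * sqrt (real CARD('n)) * L_f"
      and h: "0 < h" "h \<le> 1 / (2 * lam)"
      and u: "\<forall>t\<ge>0. u t \<in> U"
      and "(\<lambda>t. (norm (u t))\<^sup>2) integrable_on {0..}"
      \<comment> \<open>Unused, like the compactness of \<open>U\<close> and the continuity of \<open>f\<close> and \<open>g\<close>:
        the Lipschitz bounds already give everything the proof needs.\<close>
      and u_lip: "\<forall>s\<ge>0. \<forall>t\<ge>0. norm (u t - u s) \<le> L_u * \<bar>t - s\<bar>"
      and init: "y0 \<in> Om" "y 0 = y0"
      and y: "\<forall>t\<ge>0. (y has_vector_derivative f (y t) (u t)) (at t within {0..})"
    have interp_lip: "Lb-lipschitz_on Om (interp \<T> (\<lambda>a. f a w))" if "w \<in> U" for w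
      using grad that
      by (intro interp_lipschitz_on_gradient_le[OF tri Om_convex, where B = "C_I * sqrt (real CARD('n)) * L_f"])
        (auto simp: Lb_def sqrt_card)
    have "lam * h \<le> 1 / 2" using h lam_pos by (simp add: field_simps)
    moreover have "a + k *\<^sub>R f a w \<in> Om" if "a \<in> Om" "w \<in> U" "0 < k" "k \<le> h" for a w k
      using invariant[OF that(1-3)] that(4) h(2) by simp
    ultimately interpret discretized_control_problem f U L_f u L_u y g L_g M M_g Om \<T> lam Lb h
      using f_lip_y f_lip_u g_lip_y g_lip_u u u_lip y tri Om_convex Om_closed M_f_norm M_g
        interp_lip Lb h(1) init
      by unfold_locales auto
    have "\<bar>J_cont g lam y u - J_disc \<T> f g lam h y0 (\<lambda>i. u (real i * h))\<bar> \<le> (h + mesh \<T>) * C"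
      using cost_error_le init(2) by (simp add: C_def)
    also have "\<dots> \<le> max 1 C * (h + mesh \<T>)"
      using h(1) mesh_nonneg[OF tri init(1)] by (simp add: mult.commute mult_left_mono)
    finally show "\<bar>J_cont g lam y u - J_disc \<T> f g lam h y0 (\<lambda>i. u (real i * h))\<bar>
        \<le> max 1 C * (h + mesh \<T>)" .
  qed
qed

end
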